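(* Let $\Lambda\subset H^0(\mathbb{P}^r,\mathcal{O}_{\mathbb{P}^r}(2))$ be a linear system of quadrics with $\dim\Lambda=\alpha+1$, let $\Phi:\mathbb{P}^r\dashrightarrow\mathbb{P}^\alpha$ be the associated rational map, and let $X$ be the base scheme of $\Lambda$. Let $W\subset G(1,r)$ be the Zariski closure of the set of lines $L\subset\mathbb{P}^r$ with $L\cap X=\emptyset$ for which $\Phi_{|L}:L\to\Phi(L)$ is a double covering of a line. Then $W=\emptyset$ if and only if all fibres of $\Phi$ are linear spaces.
   Context: Over $\mathbb{C}$. The fibre of $\Phi$ through $P\in\mathbb{P}^r\setminus X$ means the Zariski closure $\overline{\Phi^{-1}(\Phi(P))}$. $G(1,r)$ is the Grassmannian of lines in $\mathbb{P}^r$. *)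

theory Defs
  imports "HOL-Analysis.Analysis"
begin

text \<open>Points of P^r are represented by nonzero vectors of complex^'n (CARD('n) = r+1);
  all linear algebra is complex-linear (the vec interpretation with scaling (*s)).\<close>

definition qf :: "complex^'n^'n \<Rightarrow> complex^'n \<Rightarrow> complex" where
  "qf A x = (\<Sum>i\<in>UNIV. \<Sum>j\<in>UNIV. A$i$j * x$i * x$j)"

text \<open>The rational map Phi given by a basis Q of the linear system (affine cone version).\<close>
definition qmap :: "('m::finite \<Rightarrow> complex^'n^'n) \<Rightarrow> complex^'n \<Rightarrow> complex^'m" where
  "qmap Q x = (\<chi> k. qf (Q k) x)"

text \<open>The quadrics Q k are linearly independent (so the system has vector dimension CARD('m)).\<close>
definition qf_independent :: "('m::finite \<Rightarrow> complex^'n^'n) \<Rightarrow> bool" where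
  "qf_independent Q \<longleftrightarrow>
     (\<forall>c::'m \<Rightarrow> complex. (\<forall>x. (\<Sum>k\<in>UNIV. c k * qf (Q k) x) = 0) \<longrightarrow> (\<forall>k. c k = 0))"

text \<open>Affine cone over the base locus X.\<close>
definition base_cone :: "('m::finite \<Rightarrow> complex^'n^'n) \<Rightarrow> (complex^'n) set" where
  "base_cone Q = {x. \<forall>k. qf (Q k) x = 0}"

definition proj_pts :: "(('a::field)^'k) set \<Rightarrow> (('a^'k) set) set" where
  "proj_pts S = (\<lambda>x. vec.span {x}) ` (S - {0})"

definition hom_poly :: "nat \<Rightarrow> (complex^'n \<Rightarrow> complex) \<Rightarrow> bool" where
  "hom_poly d f \<longleftrightarrow> (\<exists>M c. finite M \<and> (\<forall>m\<in>M. (\<Sum>i\<in>UNIV. m i) = d) \<and>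
       f = (\<lambda>x. \<Sum>m\<in>M. c m * (\<Prod>i\<in>UNIV. x$i ^ m i)))"

text \<open>Zariski closure in P^r of a cone S (as the affine cone of the closure).\<close>
definition zar_closure :: "(complex^'n) set \<Rightarrow> (complex^'n) set" where
  "zar_closure S = {x. \<forall>d f. hom_poly d f \<and> (\<forall>y\<in>S. f y = 0) \<longrightarrow> f x = 0}"

definition fibre :: "('m::finite \<Rightarrow> complex^'n^'n) \<Rightarrow> complex^'n \<Rightarrow> (complex^'n) set" where
  "fibre Q P = zar_closure
     {x. x \<noteq> 0 \<and> x \<notin> base_cone Q \<and> vec.span {qmap Q x} = vec.span {qmap Q P}}"

text \<open>Lines of P^r = 2-dimensional linear subspaces of complex^'n.\<close>
definition is_line :: "(complex^'n) set \<Rightarrow> bool" where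
  "is_line L \<longleftrightarrow> vec.subspace L \<and> vec.dim L = 2"

text \<open>Phi restricted to L is a double covering of a line: the image Phi(L) spans a
  projective line, and over all but finitely many points of Phi(L) the fibre of Phi|L
  consists of exactly two points.\<close>
definition double_cover_line :: "('m::finite \<Rightarrow> complex^'n^'n) \<Rightarrow> (complex^'n) set \<Rightarrow> bool" where
  "double_cover_line Q L \<longleftrightarrow>
     vec.dim (vec.span (qmap Q ` L)) = 2 \<and>
     finite {y \<in> proj_pts (qmap Q ` L).
        card (proj_pts {x \<in> L. x \<noteq> 0 \<and> vec.span {qmap Q x} = y}) \<noteq> 2}"

definition W_lines :: "('m::finite \<Rightarrow> complex^'n^'n) \<Rightarrow> (complex^'n) set set" where
  "W_lines Q = {L. is_line L \<and> L \<inter> base_cone Q = {0} \<and> double_cover_line Q L}"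

end

theory Submission
  imports Defs "HOL-Computational_Algebra.Polynomial"
begin

text \<open>If the fibres of \<open>\<Phi>\<close> are linear, no line \<open>L\<close> of \<open>W\<close> can exist: a quadratic map from
  \<open>L\<close> onto a line identifies two distinct points \<open>p, p'\<close> of \<open>L\<close>, so \<open>L = span {p, p'}\<close> lies in
  the fibre through \<open>p\<close> and \<open>\<Phi>(L)\<close> is a point.

  Conversely, suppose \<open>W\<close> is empty and let \<open>u, v\<close> be independent points of one fibre. On the
  line they span, \<open>\<Phi>(s u + t v) = (s\<^sup>2 + c t\<^sup>2) A + s t B\<close> with \<open>\<Phi>(v) = c \<Phi>(u)\<close>. If
  \<open>A, B\<close> were independent this would be a double covering of a line and the line would miss
  the base locus, i.e. it would belong to \<open>W\<close>. Hence \<open>B\<close> is a multiple of \<open>A\<close>, and the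
  whole line, minus the base locus, lies in the fibre. Since a homogeneous polynomial vanishing
  at all but finitely many points of a line vanishes on it, induction along a basis shows that
  the Zariski closure of a fibre contains the span of its points; a separating linear form
  gives the reverse inclusion.\<close>

section \<open>Quadratic maps and their polarization\<close>

definition polar :: "complex^'n^'n \<Rightarrow> complex^'n \<Rightarrow> complex^'n \<Rightarrow> complex" where
  "polar A x y = (\<Sum>i\<in>UNIV. \<Sum>j\<in>UNIV. A$i$j * (x$i * y$j + y$i * x$j))"

definition qmap_polar ::
  "('m::finite \<Rightarrow> complex^'n^'n) \<Rightarrow> complex^'n \<Rightarrow> complex^'n \<Rightarrow> complex^'m" where
  "qmap_polar Q x y = (\<chi> k. polar (Q k) x y)"

lemma qf_lincomb: "qf A (s *s x + t *s y) = s^2 * qf A x + (s*t) * polar A x y + t^2 * qf A y"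
proof -
  have "qf A (s *s x + t *s y) = (\<Sum>i\<in>UNIV. \<Sum>j\<in>UNIV. s^2 * (A$i$j * x$i * x$j)
      + (s*t) * (A$i$j * (x$i * y$j + y$i * x$j)) + t^2 * (A$i$j * y$i * y$j))"
    unfolding qf_def by (intro sum.cong refl) (simp add: algebra_simps power2_eq_square)
  also have "\<dots> = s^2 * qf A x + (s*t) * polar A x y + t^2 * qf A y"
    unfolding qf_def polar_def by (simp add: sum.distrib sum_distrib_left)
  finally show ?thesis .
qed

lemma qmap_component [simp]: "qmap Q x $ k = qf (Q k) x"
  by (simp add: qmap_def)

lemma qmap_lincomb:
  "qmap Q (s *s x + t *s y) = s^2 *s qmap Q x + (s*t) *s qmap_polar Q x y + t^2 *s qmap Q y"
  by (simp add: vec_eq_iff qmap_polar_def qf_lincomb)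

lemma base_cone_iff_qmap_eq_0: "x \<in> base_cone Q \<longleftrightarrow> qmap Q x = 0"
  by (simp add: base_cone_def vec_eq_iff)

lemma qf_zero [simp]: "qf A 0 = 0"
  by (simp add: qf_def)

lemma qmap_zero [simp]: "qmap Q 0 = 0"
  by (simp add: vec_eq_iff)

lemma zero_in_base_cone [simp]: "0 \<in> base_cone Q"
  by (simp add: base_cone_def)

section \<open>Homogeneous polynomials\<close>

lemma hom_poly_zero: "hom_poly d (\<lambda>x. 0)"
  unfolding hom_poly_def by (rule exI[of _ "{}"]) auto

lemma hom_poly_cmult:
  assumes "hom_poly d f" shows "hom_poly d (\<lambda>x. a * f x)"
proof -
  obtain M c where "finite M" "\<forall>m\<in>M. (\<Sum>i\<in>UNIV. m i) = d"
     "f = (\<lambda>x. \<Sum>m\<in>M. c m * (\<Prod>i\<in>UNIV. x$i ^ m i))"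
    using assms unfolding hom_poly_def by blast
  then show ?thesis unfolding hom_poly_def
    by (intro exI[of _ M] exI[of _ "\<lambda>m. a * c m"]) (auto simp: sum_distrib_left mult.assoc)
qed

lemma hom_poly_add:
  assumes "hom_poly d f" "hom_poly d g"
  shows "hom_poly d (\<lambda>x. f x + g x)"
proof -
  obtain M1 c1 where 1: "finite M1" "\<forall>m\<in>M1. (\<Sum>i\<in>UNIV. m i) = d"
     "f = (\<lambda>x. \<Sum>m\<in>M1. c1 m * (\<Prod>i\<in>UNIV. x$i ^ m i))"
    using assms(1) unfolding hom_poly_def by blast
  obtain M2 c2 where 2: "finite M2" "\<forall>m\<in>M2. (\<Sum>i\<in>UNIV. m i) = d"
     "g = (\<lambda>x. \<Sum>m\<in>M2. c2 m * (\<Prod>i\<in>UNIV. x$i ^ m i))"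
    using assms(2) unfolding hom_poly_def by blast
  define c where "c m = (if m \<in> M1 then c1 m else 0) + (if m \<in> M2 then c2 m else 0)" for m
  have "f x + g x = (\<Sum>m\<in>M1 \<union> M2. c m * (\<Prod>i\<in>UNIV. x$i ^ m i))" for x :: "complex^'a"
  proof -
    let ?p = "\<lambda>m. (\<Prod>i\<in>UNIV. x$i ^ m i)"
    have sum1: "(\<Sum>m\<in>M1 \<union> M2. if m \<in> M1 then c1 m * ?p m else 0) = (\<Sum>m\<in>M1. c1 m * ?p m)"
      using 1(1) 2(1) by (subst sum.mono_neutral_right[of "M1 \<union> M2" M1]) auto
    have sum2: "(\<Sum>m\<in>M1 \<union> M2. if m \<in> M2 then c2 m * ?p m else 0) = (\<Sum>m\<in>M2. c2 m * ?p m)"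
      using 1(1) 2(1) by (subst sum.mono_neutral_right[of "M1 \<union> M2" M2]) auto
    have "(\<Sum>m\<in>M1 \<union> M2. c m * ?p m)
        = (\<Sum>m\<in>M1 \<union> M2. (if m \<in> M1 then c1 m * ?p m else 0) + (if m \<in> M2 then c2 m * ?p m else 0))"
      by (intro sum.cong refl) (simp add: c_def distrib_right)
    also have "\<dots> = (\<Sum>m\<in>M1. c1 m * ?p m) + (\<Sum>m\<in>M2. c2 m * ?p m)"
      by (simp only: sum.distrib sum1 sum2)
    finally show ?thesis using 1(3) 2(3) by simp
  qed
  then show ?thesis
    unfolding hom_poly_def using 1 2 by (intro exI[of _ "M1 \<union> M2"] exI[of _ c]) auto
qed

lemma hom_poly_sum:
  assumes "finite I" "\<And>i. i \<in> I \<Longrightarrow> hom_poly d (f i)"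
  shows "hom_poly d (\<lambda>x. \<Sum>i\<in>I. f i x)"
  using assms by (induction I rule: finite_induct) (simp_all add: hom_poly_zero hom_poly_add)

lemma hom_poly_coordinate: "hom_poly 1 (\<lambda>x::complex^'n. x$i)"
proof -
  define m where "m k = (if k = i then 1 else (0::nat))" for k
  have "(\<Prod>k\<in>UNIV. x$k ^ m k) = (\<Prod>k\<in>UNIV. if k = i then x$k else 1)" for x :: "complex^'n"
    by (intro prod.cong refl) (simp add: m_def)
  then have "(\<Prod>k\<in>UNIV. x$k ^ m k) = x$i" for x :: "complex^'n"
    by simp
  then show ?thesis unfolding hom_poly_def
    by (intro exI[of _ "{m}"] exI[of _ "\<lambda>_. 1"]) (simp add: m_def)
qed

lemma hom_poly_coordinate_product: "hom_poly 2 (\<lambda>x::complex^'n. x$i * x$j)"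
proof -
  define m where "m k = (if k = i then 1 else 0) + (if k = j then 1 else (0::nat))" for k
  have "(\<Prod>k\<in>UNIV. x$k ^ m k) = (\<Prod>k\<in>UNIV. (if k = i then x$k else 1) * (if k = j then x$k else 1))"
    for x :: "complex^'n"
    by (intro prod.cong refl) (simp add: m_def power_add)
  then have "(\<Prod>k\<in>UNIV. x$k ^ m k) = x$i * x$j" for x :: "complex^'n"
    by (simp add: prod.distrib)
  moreover have "(\<Sum>k\<in>UNIV. m k) = 2" by (simp add: m_def sum.distrib)
  ultimately show ?thesis unfolding hom_poly_def
    by (intro exI[of _ "{m}"] exI[of _ "\<lambda>_. 1"]) simp
qed

lemma hom_poly_qf: "hom_poly 2 (qf A)"
proof -
  have "qf A = (\<lambda>x. \<Sum>i\<in>UNIV. \<Sum>j\<in>UNIV. A$i$j * (x$i * x$j))"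
    by (auto simp: qf_def mult.assoc)
  then show ?thesis
    by (simp add: hom_poly_sum hom_poly_cmult hom_poly_coordinate_product)
qed

lemma hom_poly_smult:
  assumes "hom_poly d f" shows "f (c *s x) = c^d * f x"
proof -
  obtain M a where M: "\<forall>m\<in>M. (\<Sum>i\<in>UNIV. m i) = d"
     and f: "f = (\<lambda>x. \<Sum>m\<in>M. a m * (\<Prod>i\<in>UNIV. x$i ^ m i))"
    using assms unfolding hom_poly_def by blast
  have "f (c *s x) = (\<Sum>m\<in>M. a m * (c ^ (\<Sum>i\<in>UNIV. m i) * (\<Prod>i\<in>UNIV. x$i ^ m i)))"
    unfolding f by (intro sum.cong refl) (simp add: power_mult_distrib prod.distrib power_sum)
  also have "\<dots> = c^d * f x"
    unfolding f using M by (simp add: sum_distrib_left algebra_simps)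
  finally show ?thesis .
qed

lemma hom_poly_on_line_is_poly:
  assumes "hom_poly d f" shows "\<exists>p. \<forall>s. f (x + s *s y) = poly p s"
proof -
  obtain M a where f: "f = (\<lambda>x. \<Sum>m\<in>M. a m * (\<Prod>i\<in>UNIV. x$i ^ m i))"
    using assms unfolding hom_poly_def by blast
  have "f (x + s *s y) = poly (\<Sum>m\<in>M. [:a m:] * (\<Prod>i\<in>UNIV. [:x$i, y$i:] ^ m i)) s" for s
    unfolding f by (simp add: poly_sum poly_prod algebra_simps)
  then show ?thesis by blast
qed

lemma hom_poly_eq_0_if_cofinite_on_line:
  assumes "hom_poly d f" "finite E" "\<And>s. s \<notin> E \<Longrightarrow> f (x + s *s y) = 0"
  shows "f x = 0"
proof -
  obtain p where p: "\<And>s. f (x + s *s y) = poly p s"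
    using hom_poly_on_line_is_poly[OF assms(1)] by blast
  have "p = 0"
  proof (rule ccontr)
    assume "p \<noteq> 0"
    then have "finite (E \<union> {s. poly p s = 0})"
      using assms(2) poly_roots_finite by blast
    moreover have "UNIV \<subseteq> E \<union> {s. poly p s = 0}" using assms(3) p by auto
    ultimately show False using infinite_UNIV_char_0 finite_subset by blast
  qed
  then show ?thesis using p[of 0] by simp
qed

lemma finite_line_inter_base_cone:
  assumes "y \<notin> base_cone Q" shows "finite {s. x + s *s y \<in> base_cone Q}"
proof -
  obtain k where k: "qf (Q k) y \<noteq> 0" using assms by (auto simp: base_cone_def)
  let ?p = "[:qf (Q k) x, polar (Q k) x y, qf (Q k) y:]"
  have "poly ?p s = 0" if "x + s *s y \<in> base_cone Q" for s
  proof -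
    have "qf (Q k) (1 *s x + s *s y) = 0" using that by (simp add: base_cone_def)
    then show ?thesis by (simp only: qf_lincomb) (simp add: algebra_simps power2_eq_square)
  qed
  then have "{s. x + s *s y \<in> base_cone Q} \<subseteq> {s. poly ?p s = 0}"
    by blast
  moreover have "finite {s. poly ?p s = 0}"
    using k by (intro poly_roots_finite) auto
  ultimately show ?thesis by (rule finite_subset)
qed

section \<open>Spans of one and two vectors\<close>

lemma span_singleton_smult: "c \<noteq> 0 \<Longrightarrow> vec.span {c *s a} = vec.span {a :: 'a::field^'k}"
proof -
  assume "c \<noteq> 0"
  then have "a = inverse c *s (c *s a)" by (simp add: vector_smult_assoc)
  then have "a \<in> vec.span {c *s a}" by (metis singletonI vec.span_base vec.span_scale)
  moreover have "c *s a \<in> vec.span {a}" by (simp add: vec.span_base vec.span_scale)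
  ultimately show ?thesis unfolding vec.span_eq by auto
qed

lemma span_singleton_eq_iff:
  assumes "(a::'a::field^'k) \<noteq> 0" "b \<noteq> 0"
  shows "vec.span {a} = vec.span {b} \<longleftrightarrow> (\<exists>c. c \<noteq> 0 \<and> a = c *s b)"
proof
  assume "vec.span {a} = vec.span {b}"
  then have "a \<in> vec.span {b}" by (metis insertI1 vec.span_base)
  then obtain c where "a = c *s b" by (auto simp: vec.span_singleton)
  with assms show "\<exists>c. c \<noteq> 0 \<and> a = c *s b" by auto
qed (auto simp: span_singleton_smult)

lemma in_span_pair_iff: "x \<in> vec.span {u, v} \<longleftrightarrow> (\<exists>s t. x = s *s u + t *s v)"
proof
  assume "x \<in> vec.span {u, v}"
  then obtain s t where "x - s *s u = t *s v"
    by (auto simp: vec.span_insert vec.span_singleton)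
  then show "\<exists>s t. x = s *s u + t *s v" by (metis diff_add_cancel add.commute)
qed (auto intro: vec.span_add vec.span_scale vec.span_base)

lemma lincomb_eq_0:
  assumes "(u::'a::field^'k) \<noteq> 0" "v \<notin> vec.span {u}" "s *s u + t *s v = 0"
  shows "s = 0 \<and> t = 0"
proof -
  have "t = 0"
  proof (rule ccontr)
    assume t: "t \<noteq> 0"
    then have "v = (- s / t) *s u" using assms(3)
      by (simp add: vec_eq_iff field_simps) (metis add.commute add_eq_0_iff2 mult.commute)
    then show False using assms(2) by (metis vec.span_base vec.span_scale singletonI)
  qed
  then show ?thesis using assms by simp
qed

lemma lincomb_eq_iff:
  assumes "(u::'a::field^'k) \<noteq> 0" "v \<notin> vec.span {u}"
  shows "s *s u + t *s v = s' *s u + t' *s v \<longleftrightarrow> s = s' \<and> t = t'"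
proof
  assume "s *s u + t *s v = s' *s u + t' *s v"
  then have "(s - s') *s u + (t - t') *s v = 0" by (simp add: vec_eq_iff algebra_simps)
  from lincomb_eq_0[OF assms this] show "s = s' \<and> t = t'" by simp
qed simp

lemma span_lincomb_eq_iff:
  assumes "(u::'a::field^'k) \<noteq> 0" "v \<notin> vec.span {u}" "s \<noteq> 0 \<or> t \<noteq> 0" "s' \<noteq> 0 \<or> t' \<noteq> 0"
  shows "vec.span {s *s u + t *s v} = vec.span {s' *s u + t' *s v} \<longleftrightarrow> s * t' = s' * t"
proof -
  have nz: "a *s u + b *s v \<noteq> 0" if "a \<noteq> 0 \<or> b \<noteq> 0" for a b
    using lincomb_eq_0[OF assms(1,2)] that by blast
  have "vec.span {s *s u + t *s v} = vec.span {s' *s u + t' *s v}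
        \<longleftrightarrow> (\<exists>c. c \<noteq> 0 \<and> s = c * s' \<and> t = c * t')"
  proof -
    have "c *s (s' *s u + t' *s v) = (c * s') *s u + (c * t') *s v" for c
      by (simp add: vec_eq_iff algebra_simps)
    then show ?thesis using nz[OF assms(3)] nz[OF assms(4)]
      by (simp add: span_singleton_eq_iff lincomb_eq_iff[OF assms(1,2)])
  qed
  also have "\<dots> \<longleftrightarrow> s * t' = s' * t"
  proof
    assume st: "s * t' = s' * t"
    show "\<exists>c. c \<noteq> 0 \<and> s = c * s' \<and> t = c * t'"
    proof (cases "s' = 0")
      case True
      then show ?thesis using st assms(3,4) by (intro exI[of _ "t / t'"]) (auto simp: field_simps)
    next
      case False
      then show ?thesis using st assms(3) by (intro exI[of _ "s / s'"]) (auto simp: field_simps)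
    qed
  qed auto
  finally show ?thesis .
qed

lemma dim_span_pair:
  assumes "(u::'a::field^'k) \<noteq> 0" "v \<notin> vec.span {u}"
  shows "vec.dim (vec.span {u, v}) = 2"
proof -
  have "u \<notin> vec.span {v}"
  proof
    assume "u \<in> vec.span {v}"
    then obtain k where "u = k *s v" by (auto simp: vec.span_singleton)
    then have "1 *s u + (- k) *s v = 0" by (simp add: vec_eq_iff)
    from lincomb_eq_0[OF assms this] show False by simp
  qed
  moreover have "v \<noteq> 0" using assms(2) vec.span_zero by metis
  ultimately show ?thesis by (simp add: vec.dim_span vec.dim_insert)
qed

lemma is_line_span_pair:
  assumes "(u::complex^'n) \<noteq> 0" "v \<notin> vec.span {u}"
  shows "is_line (vec.span {u, v})"
  using dim_span_pair[OF assms] by (simp add: is_line_def)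

lemma is_line_obtain_basis:
  assumes "is_line L"
  obtains u v where "u \<noteq> 0" "v \<notin> vec.span {u}" "L = vec.span {u, v}"
proof -
  obtain B where B: "B \<subseteq> L" "vec.independent B" "L \<subseteq> vec.span B" "card B = vec.dim L"
    using vec.basis_exists by blast
  then obtain u v where uv: "B = {u, v}" "u \<noteq> v"
    using assms by (auto simp: is_line_def card_2_iff)
  have "vec.span {u, v} \<subseteq> L"
    using B(1) uv assms by (simp add: is_line_def vec.span_minimal)
  then have "L = vec.span {u, v}" using B(3) uv by auto
  moreover have "u \<noteq> 0" using B(2) uv vec.dependent_zero by blast
  moreover have "v \<notin> vec.span {u}"
  proof
    assume "v \<in> vec.span {u}"
    moreover have "{u, v} - {v} = {u}" using uv(2) by auto
    ultimately have "vec.dependent {u, v}" unfolding vec.dependent_def by auto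
    then show False using B(2) uv by simp
  qed
  ultimately show ?thesis using that by blast
qed

section \<open>Fibres\<close>

definition fibre_set :: "('m::finite \<Rightarrow> complex^'n^'n) \<Rightarrow> complex^'n \<Rightarrow> (complex^'n) set" where
  "fibre_set Q P = {x. x \<noteq> 0 \<and> x \<notin> base_cone Q \<and> vec.span {qmap Q x} = vec.span {qmap Q P}}"

lemma fibre_eq_zar_closure: "fibre Q P = zar_closure (fibre_set Q P)"
  by (simp add: fibre_def fibre_set_def)

lemma zar_closure_superset: "S \<subseteq> zar_closure S"
  by (auto simp: zar_closure_def)

lemma zar_closureD:
  "x \<in> zar_closure S \<Longrightarrow> hom_poly d f \<Longrightarrow> (\<And>y. y \<in> S \<Longrightarrow> f y = 0) \<Longrightarrow> f x = 0"
  by (auto simp: zar_closure_def)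

text \<open>Away from the base locus the fibre is already closed: proportionality of
  \<open>qmap Q x\<close> to \<open>qmap Q P\<close> is cut out by the quadrics
  \<open>(qmap Q P)$l * qf (Q k) - (qmap Q P)$k * qf (Q l)\<close>.\<close>
lemma zar_closure_fibre_set_outside_base_cone:
  assumes P: "P \<notin> base_cone Q" and x: "x \<in> zar_closure (fibre_set Q P)" "x \<notin> base_cone Q"
  shows "x \<in> fibre_set Q P"
proof -
  define w where "w = qmap Q P"
  have w0: "w \<noteq> 0" using P by (simp add: w_def base_cone_iff_qmap_eq_0)
  then obtain l where l: "w $ l \<noteq> 0" by (metis vec_eq_iff zero_index)
  have minors: "qf (Q k) x * w$l = w$k * qf (Q l) x" for k
  proof -
    let ?f = "\<lambda>y. w$l * qf (Q k) y + (- w$k) * qf (Q l) y"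
    have "?f y = 0" if y: "y \<in> fibre_set Q P" for y
    proof -
      have "qmap Q y \<noteq> 0" using y by (simp add: fibre_set_def base_cone_iff_qmap_eq_0)
      with y w0 obtain c where "qmap Q y = c *s w"
        by (auto simp: fibre_set_def span_singleton_eq_iff w_def)
      then have "qf (Q j) y = c * w$j" for j by (metis qmap_component vector_smult_component)
      then show ?thesis by (simp add: algebra_simps)
    qed
    moreover have "hom_poly 2 ?f" by (intro hom_poly_add hom_poly_cmult hom_poly_qf)
    ultimately have "?f x = 0" using zar_closureD[OF x(1)] by blast
    then show ?thesis by (simp add: algebra_simps)
  qed
  have "qmap Q x = (qf (Q l) x / w$l) *s w"
    unfolding vec_eq_iff using minors l by (auto simp: field_simps)
  moreover have "qmap Q x \<noteq> 0" using x(2) by (simp add: base_cone_iff_qmap_eq_0)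
  ultimately have "vec.span {qmap Q x} = vec.span {qmap Q P}"
    by (metis span_singleton_smult vector_smult_lzero w_def)
  then show ?thesis using x(2) by (auto simp: fibre_set_def)
qed

section \<open>Linear fibres leave no doubly covered lines\<close>

lemma binary_quadratic_map_not_injective:
  fixes A B C :: "complex^'m"
  assumes q: "\<And>s t. q s t = s^2 *s A + (s*t) *s B + t^2 *s C"
    and dim: "vec.dim (vec.span {A, B, C}) \<le> 2"
    and nonzero: "\<And>s t. s \<noteq> 0 \<or> t \<noteq> 0 \<Longrightarrow> q s t \<noteq> 0"
  obtains s t s' t' where "s * t' \<noteq> s' * t" "vec.span {q s t} = vec.span {q s' t'}"
proof -
  have A0: "A \<noteq> 0" using nonzero[of 1 0] by (simp add: q)
  show ?thesis
  proof (cases "C \<in> vec.span {A}")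
    case True
    then obtain c where "C = c *s A" by (auto simp: vec.span_singleton)
    moreover have "c \<noteq> 0" using nonzero[of 0 1] calculation by (auto simp: q)
    ultimately show ?thesis
      by (intro that[where s=1 and t=0 and s'=0 and t'=1]) (simp_all add: q span_singleton_smult)
  next
    case False
    have "vec.span {A, C} = vec.span {A, B, C}"
    proof (rule vec.subspace_dim_equal)
      show "vec.span {A, C} \<subseteq> vec.span {A, B, C}" by (intro vec.span_mono) auto
      show "vec.dim (vec.span {A, B, C}) \<le> vec.dim (vec.span {A, C})"
        using dim dim_span_pair[OF A0 False] by simp
    qed simp_all
    then obtain x y where B: "B = x *s A + y *s C"
      using in_span_pair_iff[of B A C] vec.span_base[of B "{A, B, C}"] by auto
    txt \<open>In the basis \<open>A, C\<close> the map is \<open>(s^2 + x s t) A + (y s t + t^2) C\<close>; the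
      following pairs of distinct points are identified.\<close>
    consider (y) "y \<noteq> 0" | (x) "y = 0" "x \<noteq> 0" | (xy) "x = 0" "y = 0" by blast
    then show ?thesis
    proof cases
      case y
      have "q 1 (- y) = (1 - x*y) *s q 1 0"
        unfolding q B by (simp add: vec_eq_iff algebra_simps power2_eq_square)
      moreover have "1 - x*y \<noteq> 0" using nonzero[of 1 "- y"] calculation by auto
      ultimately have "vec.span {q 1 (- y)} = vec.span {q 1 0}"
        by (metis span_singleton_smult)
      then show ?thesis using y by (intro that[where s=1 and t="- y" and s'=1 and t'=0]) auto
    next
      case x
      have "q (- x) 1 = q 0 1"
        unfolding q B using x by (simp add: vec_eq_iff algebra_simps power2_eq_square)
      then show ?thesis using that[where s="- x" and t=1 and s'=0 and t'=1] x by auto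
    next
      case xy
      have "q 1 1 = q 1 (- 1)" unfolding q B using xy by (simp add: vec_eq_iff)
      then show ?thesis using that[where s=1 and t=1 and s'=1 and t'="- 1"] by auto
    qed
  qed
qed

lemma W_line_identifies_two_points:
  assumes "L \<in> W_lines Q"
  obtains p p' where "p \<in> L" "p' \<in> L" "p \<noteq> 0" "p' \<noteq> 0" "vec.span {p} \<noteq> vec.span {p'}"
    "vec.span {qmap Q p} = vec.span {qmap Q p'}"
proof -
  have line: "is_line L" and off_base: "\<And>x. x \<in> L \<Longrightarrow> x \<in> base_cone Q \<Longrightarrow> x = 0"
    and dc: "double_cover_line Q L"
    using assms by (auto simp: W_lines_def)
  obtain u v where u0: "u \<noteq> 0" and vu: "v \<notin> vec.span {u}" and L: "L = vec.span {u, v}"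
    using is_line_obtain_basis[OF line] .
  define A B C where "A = qmap Q u" and "B = qmap_polar Q u v" and "C = qmap Q v"
  define q where "q s t = s^2 *s A + (s*t) *s B + t^2 *s C" for s t
  have q: "qmap Q (s *s u + t *s v) = q s t" for s t
    by (simp add: q_def A_def B_def C_def qmap_lincomb)
  have in_L: "s *s u + t *s v \<in> L" for s t
    using L in_span_pair_iff by blast
  have nonzero: "s *s u + t *s v \<noteq> 0" if "s \<noteq> 0 \<or> t \<noteq> 0" for s t
    using lincomb_eq_0[OF u0 vu] that by blast
  have q_nonzero: "q s t \<noteq> 0" if "s \<noteq> 0 \<or> t \<noteq> 0" for s t
  proof -
    have "s *s u + t *s v \<notin> base_cone Q" using off_base[OF in_L] nonzero[OF that] by blast
    then show ?thesis by (simp add: q base_cone_iff_qmap_eq_0)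
  qed
  define Im where "Im = vec.span (qmap Q ` L)"
  have "qmap Q (s *s u + t *s v) \<in> Im" for s t
    unfolding Im_def using in_L by (intro vec.span_base imageI)
  then have "q s t \<in> Im" for s t by (simp only: q)
  moreover have "A = q 1 0" "C = q 0 1" "B = q 1 1 - q 1 0 - q 0 1" by (simp_all add: q_def)
  moreover have "vec.subspace Im" by (simp add: Im_def)
  ultimately have "{A, B, C} \<subseteq> Im" by (simp add: vec.subspace_diff)
  then have "vec.dim (vec.span {A, B, C}) \<le> vec.dim Im"
    by (intro vec.dim_subset) (simp add: Im_def vec.span_minimal)
  also have "vec.dim Im = 2" using dc by (simp add: double_cover_line_def Im_def)
  finally obtain s t s' t' where st: "s * t' \<noteq> s' * t" and same: "vec.span {q s t} = vec.span {q s' t'}"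
    by (rule binary_quadratic_map_not_injective[OF q_def _ q_nonzero])
  have st0: "s \<noteq> 0 \<or> t \<noteq> 0" "s' \<noteq> 0 \<or> t' \<noteq> 0" using st by auto
  show ?thesis
  proof (rule that[of "s *s u + t *s v" "s' *s u + t' *s v"])
    show "vec.span {s *s u + t *s v} \<noteq> vec.span {s' *s u + t' *s v}"
      using span_lincomb_eq_iff[OF u0 vu st0] st by simp
    show "vec.span {qmap Q (s *s u + t *s v)} = vec.span {qmap Q (s' *s u + t' *s v)}"
      using same by (simp only: q)
  qed (use in_L nonzero st0 in auto)
qed

lemma span_pair_eq_line:
  assumes "is_line L" "p \<in> L" "p' \<in> L" "p \<noteq> 0" "p' \<noteq> 0" "vec.span {p} \<noteq> vec.span {p'}"
  shows "vec.span {p, p'} = L"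
proof (rule vec.subspace_dim_equal)
  have "p' \<notin> vec.span {p}"
  proof
    assume "p' \<in> vec.span {p}"
    then obtain k where k: "p' = k *s p" by (auto simp: vec.span_singleton)
    with assms(5) have "k \<noteq> 0" by auto
    with k have "vec.span {p'} = vec.span {p}" by (simp add: span_singleton_smult)
    with assms(6) show False by simp
  qed
  then show "vec.dim L \<le> vec.dim (vec.span {p, p'})"
    using dim_span_pair[OF assms(4)] assms(1) by (simp add: is_line_def)
  show "vec.span {p, p'} \<subseteq> L" using assms(1-3) by (simp add: is_line_def vec.span_minimal)
qed (use assms(1) in \<open>simp_all add: is_line_def\<close>)

lemma dim_span_qmap_le_1_if_subset_fibre:
  assumes "S \<subseteq> fibre Q P" "S \<inter> base_cone Q \<subseteq> {0}" "P \<notin> base_cone Q"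
  shows "vec.dim (vec.span (qmap Q ` S)) \<le> 1"
proof -
  have "qmap Q x \<in> vec.span {qmap Q P}" if "x \<in> S" for x
  proof (cases "x = 0")
    case False
    then have "x \<in> fibre_set Q P"
      using zar_closure_fibre_set_outside_base_cone[OF assms(3)] assms(1,2) that
      by (auto simp: fibre_eq_zar_closure)
    then have "vec.span {qmap Q x} = vec.span {qmap Q P}" by (simp add: fibre_set_def)
    then show ?thesis by (metis insertI1 vec.span_base)
  qed (simp add: vec.span_zero)
  then have "vec.span (qmap Q ` S) \<subseteq> vec.span {qmap Q P}" by (intro vec.span_minimal) auto
  then have "vec.dim (vec.span (qmap Q ` S)) \<le> vec.dim (vec.span {qmap Q P})" by (rule vec.dim_subset)
  also have "\<dots> \<le> 1" by (simp add: vec.dim_span vec.dim_insert)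
  finally show ?thesis .
qed

lemma W_lines_empty_if_fibres_linear:
  assumes linear: "\<And>P. P \<noteq> 0 \<Longrightarrow> P \<notin> base_cone Q \<Longrightarrow> vec.subspace (fibre Q P)"
  shows "W_lines Q = {}"
proof (rule ccontr)
  assume "W_lines Q \<noteq> {}"
  then obtain L where L: "L \<in> W_lines Q" by blast
  then have line: "is_line L" and off_base: "L \<inter> base_cone Q \<subseteq> {0}"
    and dim: "vec.dim (vec.span (qmap Q ` L)) = 2"
    by (auto simp: W_lines_def double_cover_line_def)
  obtain p p' where p: "p \<in> L" "p' \<in> L" "p \<noteq> 0" "p' \<noteq> 0" "vec.span {p} \<noteq> vec.span {p'}"
    and same: "vec.span {qmap Q p} = vec.span {qmap Q p'}"
    using W_line_identifies_two_points[OF L] .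
  have p_off: "p \<notin> base_cone Q" "p' \<notin> base_cone Q" using off_base p by auto
  then have "p \<in> fibre_set Q p" "p' \<in> fibre_set Q p"
    using p same by (simp_all add: fibre_set_def)
  then have "{p, p'} \<subseteq> fibre Q p"
    using zar_closure_superset fibre_eq_zar_closure by blast
  moreover have "vec.subspace (fibre Q p)" using linear p p_off by blast
  ultimately have "L \<subseteq> fibre Q p"
    using span_pair_eq_line[OF line p] vec.span_minimal by blast
  from dim_span_qmap_le_1_if_subset_fibre[OF this off_base p_off(1)] dim show False by simp
qed

section \<open>Doubly covered lines from pencils\<close>

lemma quadratic_eq_iff_roots:
  fixes a c D \<sigma> :: complex
  assumes "D^2 = a^2 - 4 * c"
  shows "\<sigma>^2 + c = a * \<sigma> \<longleftrightarrow> \<sigma> = (a + D) / 2 \<or> \<sigma> = (a - D) / 2"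
proof -
  have "\<sigma>^2 + c - a * \<sigma> = (\<sigma> - (a + D) / 2) * (\<sigma> - (a - D) / 2)"
    using assms by (simp add: field_simps power2_eq_square)
  then show ?thesis by (metis eq_iff_diff_eq_0 mult_eq_0_iff)
qed

lemma card_proj_pts_eq_2:
  assumes "p \<in> S" "p' \<in> S" "p \<noteq> 0" "p' \<noteq> 0" "vec.span {p} \<noteq> vec.span {p'}"
    and "\<And>x. x \<in> S \<Longrightarrow> x \<noteq> 0 \<Longrightarrow> vec.span {x} = vec.span {p} \<or> vec.span {x} = vec.span {p'}"
  shows "card (proj_pts S) = 2"
proof -
  have "proj_pts S = {vec.span {p}, vec.span {p'}}"
    using assms(1-4,6) unfolding proj_pts_def by blast
  then show ?thesis using assms(5) by simp
qed

text \<open>A pencil \<open>s u + t v\<close> on which \<open>g\<close> is the conic \<open>(s^2 + c t^2) A + s t B\<close>, with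
  \<open>A, B\<close> independent and \<open>c \<noteq> 0\<close>: over every point of the image line except the two
  branch points \<open>[\<plusminus>2 \<surd>c A + B]\<close> there are exactly two points.\<close>
context
  fixes g :: "complex^'n \<Rightarrow> complex^'m" and u v :: "complex^'n" and A B :: "complex^'m"
    and c :: complex
  assumes u0: "u \<noteq> 0" and vu: "v \<notin> vec.span {u}" and A0: "A \<noteq> 0" and BA: "B \<notin> vec.span {A}"
    and c0: "c \<noteq> 0"
    and g_lincomb: "\<And>s t. g (s *s u + t *s v) = (s^2 + c * t^2) *s A + (s*t) *s B"
begin

lemma pencil_lincomb_nonzero: "s \<noteq> 0 \<or> t \<noteq> 0 \<Longrightarrow> s *s u + t *s v \<noteq> 0"
  using lincomb_eq_0[OF u0 vu] by blast

lemma pencil_image_nonzero: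
  assumes "s \<noteq> 0 \<or> t \<noteq> 0" shows "g (s *s u + t *s v) \<noteq> 0"
proof
  assume "g (s *s u + t *s v) = 0"
  then have "(s^2 + c * t^2) *s A + (s*t) *s B = 0" by (simp only: g_lincomb)
  from lincomb_eq_0[OF A0 BA this] have "s^2 + c * t^2 = 0" "s * t = 0" by simp_all
  then show False using assms c0 by auto
qed

lemma span_image_pencil: "vec.span (g ` vec.span {u, v}) = vec.span {A, B}"
proof
  have "z \<in> vec.span {A, B}" if z: "z \<in> g ` vec.span {u, v}" for z
  proof -
    obtain x where x: "x \<in> vec.span {u, v}" "z = g x" using z by blast
    then obtain s t where "x = s *s u + t *s v" using in_span_pair_iff by blast
    then have "z = (s^2 + c * t^2) *s A + (s*t) *s B" by (simp only: x(2) g_lincomb)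
    then show ?thesis unfolding in_span_pair_iff by blast
  qed
  then have "g ` vec.span {u, v} \<subseteq> vec.span {A, B}" by blast
  then show "vec.span (g ` vec.span {u, v}) \<subseteq> vec.span {A, B}"
    by (simp add: vec.span_minimal)
next
  have "u \<in> vec.span {u, v}" "u + v \<in> vec.span {u, v}"
    by (auto intro: vec.span_base vec.span_add)
  then have image: "g u \<in> vec.span (g ` vec.span {u, v})" "g (u + v) \<in> vec.span (g ` vec.span {u, v})"
    by (auto intro: vec.span_base)
  have "A = g u" "B = g (u + v) - (1 + c) *s g u"
    using g_lincomb[of 1 0] g_lincomb[of 1 1] by (simp_all add: vec_eq_iff algebra_simps)
  moreover have "g (u + v) - (1 + c) *s g u \<in> vec.span (g ` vec.span {u, v})"
    using image by (intro vec.span_diff vec.span_scale)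
  ultimately have "A \<in> vec.span (g ` vec.span {u, v})" "B \<in> vec.span (g ` vec.span {u, v})"
    using image by simp_all
  then show "vec.span {A, B} \<subseteq> vec.span (g ` vec.span {u, v})"
    by (simp add: vec.span_minimal)
qed

lemma pencil_fibre_coefficients:
  assumes x: "x \<in> vec.span {u, v}" "x \<noteq> 0" and w: "w = \<alpha> *s A + \<beta> *s B" "w \<noteq> 0"
    and fibre: "vec.span {g x} = vec.span {w}"
  obtains s t k where "x = s *s u + t *s v" "s \<noteq> 0 \<or> t \<noteq> 0" "k \<noteq> 0"
    "s^2 + c * t^2 = k * \<alpha>" "s * t = k * \<beta>"
proof -
  obtain s t where st: "x = s *s u + t *s v" using x(1) in_span_pair_iff by blast
  with x(2) have st0: "s \<noteq> 0 \<or> t \<noteq> 0" by auto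
  then obtain k where "k \<noteq> 0" and "g x = k *s w"
    using fibre pencil_image_nonzero w(2) st span_singleton_eq_iff by metis
  moreover have "g x = (s^2 + c * t^2) *s A + (s*t) *s B" by (simp only: st g_lincomb)
  moreover have "k *s w = (k * \<alpha>) *s A + (k * \<beta>) *s B"
    by (simp add: w(1) vec_eq_iff algebra_simps)
  ultimately have "(s^2 + c * t^2) *s A + (s*t) *s B = (k * \<alpha>) *s A + (k * \<beta>) *s B" by simp
  then have "s^2 + c * t^2 = k * \<alpha> \<and> s * t = k * \<beta>" by (simp only: lincomb_eq_iff[OF A0 BA])
  then show ?thesis using that st st0 \<open>k \<noteq> 0\<close> by blast
qed

lemma card_pencil_fibre_over_A:
  "card (proj_pts {x \<in> vec.span {u, v}. x \<noteq> 0 \<and> vec.span {g x} = vec.span {A}}) = 2"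
proof (rule card_proj_pts_eq_2)
  have "g u = A" "g v = c *s A" using g_lincomb[of 1 0] g_lincomb[of 0 1] by simp_all
  then show "u \<in> {x \<in> vec.span {u, v}. x \<noteq> 0 \<and> vec.span {g x} = vec.span {A}}"
    "v \<in> {x \<in> vec.span {u, v}. x \<noteq> 0 \<and> vec.span {g x} = vec.span {A}}"
    using pencil_lincomb_nonzero[of 1 0] pencil_lincomb_nonzero[of 0 1] c0
    by (auto intro: vec.span_base simp: span_singleton_smult)
  show "u \<noteq> 0" "v \<noteq> 0" using pencil_lincomb_nonzero[of 1 0] pencil_lincomb_nonzero[of 0 1] by simp_all
  show "vec.span {u} \<noteq> vec.span {v}" using span_lincomb_eq_iff[OF u0 vu, of 1 0 0 1] by simp
next
  fix x assume "x \<in> {x \<in> vec.span {u, v}. x \<noteq> 0 \<and> vec.span {g x} = vec.span {A}}"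
  then have "x \<in> vec.span {u, v}" "x \<noteq> 0" "vec.span {g x} = vec.span {A}" by auto
  moreover have "A = 1 *s A + 0 *s B" by simp
  ultimately obtain s t k where x: "x = s *s u + t *s v" "s \<noteq> 0 \<or> t \<noteq> 0" and "s * t = k * 0"
    using pencil_fibre_coefficients[of x A 1 0] A0 by blast
  then consider "t = 0" "s \<noteq> 0" | "s = 0" "t \<noteq> 0" by auto
  then show "vec.span {x} = vec.span {u} \<or> vec.span {x} = vec.span {v}"
    using span_lincomb_eq_iff[OF u0 vu x(2), of 1 0] span_lincomb_eq_iff[OF u0 vu x(2), of 0 1] x(1)
    by cases simp_all
qed

lemma card_pencil_fibre_over_unbranched:
  assumes a: "a^2 \<noteq> 4 * c"
  shows "card (proj_pts {x \<in> vec.span {u, v}. x \<noteq> 0 \<and> vec.span {g x} = vec.span {a *s A + B}}) = 2"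
proof -
  define S where "S = {x \<in> vec.span {u, v}. x \<noteq> 0 \<and> vec.span {g x} = vec.span {a *s A + B}}"
  define D where "D = csqrt (a^2 - 4 * c)"
  define r r' where "r = (a + D) / 2" and "r' = (a - D) / 2"
  have D: "D^2 = a^2 - 4 * c" by (simp add: D_def)
  note roots = quadratic_eq_iff_roots[OF D, folded r_def r'_def]
  have "r \<noteq> r'" using a D by (auto simp: r_def r'_def)
  have AB0: "a *s A + B \<noteq> 0" using lincomb_eq_0[OF A0 BA, of a 1] by auto
  have root_in_S: "\<sigma> *s u + 1 *s v \<in> S" if "\<sigma> = r \<or> \<sigma> = r'" for \<sigma>
  proof -
    have e: "\<sigma>^2 + c = a * \<sigma>" using roots that by blast
    then have "\<sigma> \<noteq> 0" using c0 by auto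
    have "\<sigma>^2 + c * 1^2 = a * \<sigma>" using e by simp
    then have "g (\<sigma> *s u + 1 *s v) = \<sigma> *s (a *s A + B)"
      by (simp only: g_lincomb) (simp add: vec_eq_iff algebra_simps)
    then have "vec.span {g (\<sigma> *s u + 1 *s v)} = vec.span {a *s A + B}"
      by (simp only: span_singleton_smult[OF \<open>\<sigma> \<noteq> 0\<close>])
    moreover have "\<sigma> *s u + 1 *s v \<in> vec.span {u, v}" using in_span_pair_iff by blast
    moreover have "\<sigma> *s u + 1 *s v \<noteq> 0" using pencil_lincomb_nonzero[of \<sigma> 1] by simp
    ultimately show ?thesis unfolding S_def by blast
  qed
  have "card (proj_pts S) = 2"
  proof (rule card_proj_pts_eq_2)
    show "r *s u + 1 *s v \<in> S" "r' *s u + 1 *s v \<in> S" using root_in_S by simp_all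
    show "r *s u + 1 *s v \<noteq> 0" "r' *s u + 1 *s v \<noteq> 0"
      using pencil_lincomb_nonzero[of r 1] pencil_lincomb_nonzero[of r' 1] by simp_all
    show "vec.span {r *s u + 1 *s v} \<noteq> vec.span {r' *s u + 1 *s v}"
      using span_lincomb_eq_iff[OF u0 vu, of r 1 r' 1] \<open>r \<noteq> r'\<close> by simp
  next
    fix x assume "x \<in> S" "x \<noteq> 0"
    then obtain s t k where x: "x = s *s u + t *s v" "s \<noteq> 0 \<or> t \<noteq> 0" and "k \<noteq> 0"
      and k: "s^2 + c * t^2 = k * a" "s * t = k * 1"
      using pencil_fibre_coefficients[of x "a *s A + B" a 1] AB0 by (auto simp: S_def)
    then have "t \<noteq> 0" by auto
    then have "(s / t)^2 + c = a * (s / t)"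
      using k by (simp add: field_simps power2_eq_square)
    then have "s / t = r \<or> s / t = r'" using roots by blast
    then have "s * 1 = r * t \<or> s * 1 = r' * t" using \<open>t \<noteq> 0\<close> by (auto simp: field_simps)
    moreover have "vec.span {x} = vec.span {\<rho> *s u + 1 *s v} \<longleftrightarrow> s * 1 = \<rho> * t" for \<rho>
      using span_lincomb_eq_iff[OF u0 vu x(2), of \<rho> 1] x(1) by simp
    ultimately show "vec.span {x} = vec.span {r *s u + 1 *s v} \<or> vec.span {x} = vec.span {r' *s u + 1 *s v}"
      by blast
  qed
  then show ?thesis by (simp add: S_def)
qed

lemma finite_irregular_pencil_fibres:
  "finite {y \<in> proj_pts (g ` vec.span {u, v}).
     card (proj_pts {x \<in> vec.span {u, v}. x \<noteq> 0 \<and> vec.span {g x} = y}) \<noteq> 2}"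
proof -
  let ?r = "csqrt c"
  let ?branch = "{vec.span {(2 * ?r) *s A + B}, vec.span {(- (2 * ?r)) *s A + B}}"
  have "y \<in> ?branch" if y: "y \<in> proj_pts (g ` vec.span {u, v})"
    and irregular: "card (proj_pts {x \<in> vec.span {u, v}. x \<noteq> 0 \<and> vec.span {g x} = y}) \<noteq> 2"
    for y
  proof -
    obtain z where z: "z \<in> g ` vec.span {u, v}" "z \<noteq> 0" "y = vec.span {z}"
      using y by (auto simp: proj_pts_def)
    then have "z \<in> vec.span (g ` vec.span {u, v})" by (intro vec.span_base)
    then have "z \<in> vec.span {A, B}" by (simp only: span_image_pencil)
    then obtain \<alpha> \<beta> where z_AB: "z = \<alpha> *s A + \<beta> *s B" using in_span_pair_iff by blast
    show ?thesis
    proof (cases "\<beta> = 0")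
      case True
      then have "z = \<alpha> *s A" "\<alpha> \<noteq> 0" using z_AB z(2) by auto
      then have "y = vec.span {A}" by (simp only: z(3) span_singleton_smult[OF \<open>\<alpha> \<noteq> 0\<close>])
      then show ?thesis using irregular card_pencil_fibre_over_A by simp
    next
      case False
      then have "z = \<beta> *s ((\<alpha> / \<beta>) *s A + B)" using z_AB by (simp add: vec_eq_iff field_simps)
      then have y_eq: "y = vec.span {(\<alpha> / \<beta>) *s A + B}"
        by (simp only: z(3) span_singleton_smult[OF False])
      have "(\<alpha> / \<beta>)^2 = 4 * c"
      proof (rule ccontr)
        assume "(\<alpha> / \<beta>)^2 \<noteq> 4 * c"
        from card_pencil_fibre_over_unbranched[OF this] irregular y_eq show False by simp
      qed
      then have "(\<alpha> / \<beta>)^2 = (2 * ?r)^2" by (simp add: power_mult_distrib)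
      then have "\<alpha> / \<beta> = 2 * ?r \<or> \<alpha> / \<beta> = - (2 * ?r)" using power2_eq_iff by blast
      then show ?thesis using y_eq by auto
    qed
  qed
  then have "{y \<in> proj_pts (g ` vec.span {u, v}).
     card (proj_pts {x \<in> vec.span {u, v}. x \<noteq> 0 \<and> vec.span {g x} = y}) \<noteq> 2} \<subseteq> ?branch"
    by blast
  then show ?thesis by (rule finite_subset) simp
qed

lemma pencil_in_W_lines:
  assumes "g = qmap Q" shows "vec.span {u, v} \<in> W_lines Q"
proof -
  have "x = 0" if x_in: "x \<in> vec.span {u, v}" and x_base: "x \<in> base_cone Q" for x
  proof -
    obtain s t where x: "x = s *s u + t *s v" using x_in in_span_pair_iff by blast
    then have "\<not> (s \<noteq> 0 \<or> t \<noteq> 0)"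
      using pencil_image_nonzero x_base assms by (auto simp: base_cone_iff_qmap_eq_0)
    then show ?thesis using x by simp
  qed
  then have "vec.span {u, v} \<inter> base_cone Q \<subseteq> {0}" by blast
  moreover have "vec.dim (vec.span (g ` vec.span {u, v})) = 2"
    using span_image_pencil dim_span_pair[OF A0 BA] by simp
  ultimately show ?thesis using finite_irregular_pencil_fibres is_line_span_pair[OF u0 vu] assms
    by (auto simp: W_lines_def double_cover_line_def vec.span_zero)
qed

end

section \<open>Without doubly covered lines the fibres are linear\<close>

lemma lincomb_in_fibre_set:
  assumes W: "W_lines Q = {}" and u: "u \<in> fibre_set Q P" and v: "v \<in> fibre_set Q P"
    and vu: "v \<notin> vec.span {u}" and off_base: "s *s u + t *s v \<notin> base_cone Q"
  shows "s *s u + t *s v \<in> fibre_set Q P"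
proof -
  define A where "A = qmap Q u"
  define B where "B = qmap_polar Q u v"
  have u0: "u \<noteq> 0" and A0: "A \<noteq> 0" and "qmap Q v \<noteq> 0"
    using u v by (auto simp: fibre_set_def A_def base_cone_iff_qmap_eq_0)
  moreover have "vec.span {qmap Q v} = vec.span {A}" using u v by (simp add: fibre_set_def A_def)
  ultimately obtain c where c0: "c \<noteq> 0" and vc: "qmap Q v = c *s A"
    using span_singleton_eq_iff by metis
  have q: "qmap Q (s *s u + t *s v) = (s^2 + c * t^2) *s A + (s*t) *s B" for s t
    by (simp add: qmap_lincomb vc A_def B_def vec_eq_iff algebra_simps)
  have "B \<in> vec.span {A}"
  proof (rule ccontr)
    assume "B \<notin> vec.span {A}"
    from pencil_in_W_lines[OF u0 vu A0 this c0 q refl] W show False by simp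
  qed
  then obtain b where "B = b *s A" by (auto simp: vec.span_singleton)
  then have "qmap Q (s *s u + t *s v) = (s^2 + c * t^2 + s * t * b) *s A"
    by (simp add: q vec_eq_iff algebra_simps)
  moreover have "qmap Q (s *s u + t *s v) \<noteq> 0" using off_base by (simp add: base_cone_iff_qmap_eq_0)
  ultimately have "vec.span {qmap Q (s *s u + t *s v)} = vec.span {A}"
    by (metis span_singleton_smult vector_smult_lzero)
  then show ?thesis using u off_base by (auto simp: fibre_set_def A_def)
qed

lemma hom_poly_vanishes_on_fibre_line:
  assumes W: "W_lines Q = {}" and u: "u \<in> fibre_set Q P" and b: "b \<in> fibre_set Q P"
    and f: "hom_poly d f" "\<And>y. y \<in> fibre_set Q P \<Longrightarrow> f y = 0"
  shows "f (u + t *s b) = 0"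
proof (cases "b \<in> vec.span {u}")
  case True
  then obtain k where "b = k *s u" by (auto simp: vec.span_singleton)
  then have "u + t *s b = (1 + t * k) *s u" by (simp add: vec_eq_iff algebra_simps)
  then have "f (u + t *s b) = (1 + t * k)^d * f u" by (simp only: hom_poly_smult[OF f(1)])
  then show ?thesis using f(2)[OF u] by simp
next
  case False
  have "u \<notin> base_cone Q" using u by (simp add: fibre_set_def)
  then show ?thesis
  proof (rule hom_poly_eq_0_if_cofinite_on_line[OF f(1) finite_line_inter_base_cone])
    fix s assume "s \<notin> {s. u + t *s b + s *s u \<in> base_cone Q}"
    then have "(1 + s) *s u + t *s b \<notin> base_cone Q"
      by (simp add: algebra_simps vector_sadd_rdistrib)
    with lincomb_in_fibre_set[OF W u b False] have "f ((1 + s) *s u + t *s b) = 0"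
      using f(2) by blast
    then show "f (u + t *s b + s *s u) = 0" by (simp add: algebra_simps vector_sadd_rdistrib)
  qed
qed

lemma zar_closure_smult: "x \<in> zar_closure S \<Longrightarrow> c *s x \<in> zar_closure S"
  by (auto simp: zar_closure_def hom_poly_smult)

text \<open>The point \<open>x + k b\<close> is approximated by the points \<open>x + s b\<^sub>0 + k b\<close>: for all but
  finitely many \<open>s\<close> the point \<open>x + s b\<^sub>0\<close> lies off the base locus, hence in the fibre, and
  then so does the line through it and \<open>b\<close>.\<close>
lemma zar_closure_fibre_set_add:
  assumes W: "W_lines Q = {}" and P: "P \<notin> base_cone Q" and b: "b \<in> fibre_set Q P"
    and b0: "b0 \<notin> base_cone Q" and line: "\<And>s. x + s *s b0 \<in> zar_closure (fibre_set Q P)"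
  shows "x + k *s b \<in> zar_closure (fibre_set Q P)"
  unfolding zar_closure_def
proof (intro CollectI allI impI, elim conjE)
  fix d f assume f: "hom_poly d f" "\<forall>y\<in>fibre_set Q P. f y = 0"
  then have f_fibre: "\<And>y. y \<in> fibre_set Q P \<Longrightarrow> f y = 0" by blast
  from b0 show "f (x + k *s b) = 0"
  proof (rule hom_poly_eq_0_if_cofinite_on_line[OF f(1) finite_line_inter_base_cone[of b0 Q x]])
    fix s assume "s \<notin> {s. x + s *s b0 \<in> base_cone Q}"
    with P line have "x + s *s b0 \<in> fibre_set Q P"
      using zar_closure_fibre_set_outside_base_cone by blast
    from hom_poly_vanishes_on_fibre_line[OF W this b f(1) f_fibre]
    show "f (x + k *s b + s *s b0) = 0" by (simp add: algebra_simps)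
  qed
qed

lemma span_subset_zar_closure_fibre_set:
  assumes W: "W_lines Q = {}" and P: "P \<in> fibre_set Q P"
    and "finite S" "S \<subseteq> fibre_set Q P"
  shows "vec.span S \<subseteq> zar_closure (fibre_set Q P)"
  using assms(3,4)
proof (induction S rule: finite_induct)
  case empty
  have "0 *s P \<in> zar_closure (fibre_set Q P)"
    using P zar_closure_superset zar_closure_smult by blast
  then show ?case by simp
next
  case (insert b S)
  have b: "b \<in> fibre_set Q P" and S: "S \<subseteq> fibre_set Q P" using insert.prems by auto
  have IH: "vec.span S \<subseteq> zar_closure (fibre_set Q P)" using insert.IH S by blast
  show ?case
  proof
    fix y assume "y \<in> vec.span (insert b S)"
    then obtain k where x: "y - k *s b \<in> vec.span S" by (auto simp: vec.span_insert)
    show "y \<in> zar_closure (fibre_set Q P)"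
    proof (cases "S = {}")
      case True
      then have "y = k *s b" using x by simp
      then show ?thesis using b zar_closure_superset zar_closure_smult by blast
    next
      case False
      then obtain b0 where b0: "b0 \<in> S" by blast
      have "y - k *s b + s *s b0 \<in> vec.span S" for s
        by (rule vec.span_add[OF x vec.span_scale[OF vec.span_base[OF b0]]])
      moreover have "b0 \<notin> base_cone Q" "P \<notin> base_cone Q" using b0 S P by (auto simp: fibre_set_def)
      ultimately have "(y - k *s b) + k *s b \<in> zar_closure (fibre_set Q P)"
        using zar_closure_fibre_set_add[OF W _ b] IH by blast
      then show ?thesis by simp
    qed
  qed
qed

lemma exists_linear_form_separating:
  fixes S :: "(complex^'n) set"
  assumes "x \<notin> vec.span S"
  obtains g where "hom_poly 1 g" "\<And>y. y \<in> S \<Longrightarrow> g y = 0" "g x \<noteq> 0"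
proof -
  interpret vp: vector_space_pair "(*s) :: complex \<Rightarrow> complex^'n \<Rightarrow> complex^'n"
    "(*) :: complex \<Rightarrow> complex \<Rightarrow> complex"
    by (simp add: vector_space_pair_def vec.vector_space_axioms
        vector_space_over_itself.vector_space_axioms)
  obtain B where B: "B \<subseteq> vec.span S" "vec.independent B" "vec.span S \<subseteq> vec.span B"
    by (rule vec.basis_exists)
  have "vec.span B \<subseteq> vec.span S" using B(1) by (simp add: vec.span_minimal)
  then have xB: "x \<notin> vec.span B" using assms B(3) by blast
  then have "vec.independent (insert x B)" using B(2) by (rule vec.independent_insertI)
  then obtain g where lin: "Vector_Spaces.linear (*s) (*) g"
    and g: "\<forall>z\<in>insert x B. g z = (if z = x then 1 else 0)"
    using vp.linear_independent_extend[of "insert x B" "\<lambda>z. if z = x then 1 else 0"] by blast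
  have "\<forall>b\<in>B. g b = 0"
  proof
    fix b assume b: "b \<in> B"
    then have "b \<noteq> x" using xB vec.span_base by blast
    then show "g b = 0" using g b by simp
  qed
  then have g_span: "g z = 0" if "z \<in> vec.span B" for z
    using vp.linear_eq_0_on_span[OF lin _ that] by blast
  have g_coordinates: "g = (\<lambda>y. \<Sum>i\<in>UNIV. g (axis i 1) * y$i)"
  proof
    fix y
    have "g y = g (\<Sum>i\<in>UNIV. y$i *s axis i 1)" by (simp add: basis_expansion)
    also have "\<dots> = (\<Sum>i\<in>UNIV. g (y$i *s axis i 1))" by (rule vp.linear_sum[OF lin])
    also have "\<dots> = (\<Sum>i\<in>UNIV. g (axis i 1) * y$i)"
      by (intro sum.cong refl) (simp add: vp.linear_scale[OF lin] mult.commute)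
    finally show "g y = (\<Sum>i\<in>UNIV. g (axis i 1) * y$i)" .
  qed
  have "hom_poly 1 g"
    by (subst g_coordinates) (intro hom_poly_sum hom_poly_cmult hom_poly_coordinate, simp)
  moreover have "g y = 0" if "y \<in> S" for y
    using g_span B(3) vec.span_base[OF that] by blast
  ultimately show ?thesis using that g by simp
qed

lemma fibre_eq_span_fibre_set:
  assumes W: "W_lines Q = {}" and P: "P \<noteq> 0" "P \<notin> base_cone Q"
  shows "fibre Q P = vec.span (fibre_set Q P)"
proof
  obtain B where B: "B \<subseteq> fibre_set Q P" "vec.independent B" "fibre_set Q P \<subseteq> vec.span B"
    by (rule vec.basis_exists)
  have "P \<in> fibre_set Q P" using P by (simp add: fibre_set_def)
  from span_subset_zar_closure_fibre_set[OF W this vec.finiteI_independent[OF B(2)] B(1)]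
  have "vec.span B \<subseteq> zar_closure (fibre_set Q P)" .
  moreover have "vec.span (fibre_set Q P) \<subseteq> vec.span B" using B(3) by (simp add: vec.span_minimal)
  ultimately show "vec.span (fibre_set Q P) \<subseteq> fibre Q P" by (simp add: fibre_eq_zar_closure)
next
  show "fibre Q P \<subseteq> vec.span (fibre_set Q P)"
  proof
    fix x assume "x \<in> fibre Q P"
    then have x: "x \<in> zar_closure (fibre_set Q P)" by (simp add: fibre_eq_zar_closure)
    show "x \<in> vec.span (fibre_set Q P)"
    proof (rule ccontr)
      assume "x \<notin> vec.span (fibre_set Q P)"
      then obtain g where g: "hom_poly 1 g" "\<And>y. y \<in> fibre_set Q P \<Longrightarrow> g y = 0" "g x \<noteq> 0"
        by (rule exists_linear_form_separating) blast
      from zar_closureD[OF x g(1,2)] g(3) show False by blast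
    qed
  qed
qed

theorem corollary4p4:
  fixes Q :: "'m::finite \<Rightarrow> complex^'n^'n"
  assumes "qf_independent Q"
  shows "W_lines Q = {} \<longleftrightarrow>
           (\<forall>P. P \<noteq> 0 \<and> P \<notin> base_cone Q \<longrightarrow> vec.subspace (fibre Q P))"
proof
  assume "W_lines Q = {}"
  then show "\<forall>P. P \<noteq> 0 \<and> P \<notin> base_cone Q \<longrightarrow> vec.subspace (fibre Q P)"
    by (simp add: fibre_eq_span_fibre_set)
next
  assume "\<forall>P. P \<noteq> 0 \<and> P \<notin> base_cone Q \<longrightarrow> vec.subspace (fibre Q P)"
  then show "W_lines Q = {}" by (intro W_lines_empty_if_fibres_linear) blast
qed

end
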